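(* Let $f:\mathbb{R}^n\times\mathbb{R}^m\to\mathbb{R}$ be twice continuously differentiable, $\mu$-strongly convex in $x$ and $\mu$-strongly concave in $y$ ($\mu>0$), with the largest singular value of $\nabla F(z)$ at most $L$ for all $z$ and $\|\nabla F(z)-\nabla F(z')\|\le L_2\|z-z'\|$, where $z=(x;y)$ and $F(z)=(\nabla_x f(x,y);-\nabla_y f(x,y))$. Let $m(z)=\frac12\|F(z)\|^2$, and for a starting point $z^0$ let $D=\max\{\|z-z^0\|: m(z)\le m(z^0)\}$ and $L_m=L^2+L_2LD$. Let $\{z^k\}$ be generated by the CRN-SPP method (described in the context) with constant stepsize $\alpha=\frac{\mu^2}{2L_m}<1$. Then for every $k$, $$m(z^{k+1})-m(z^k)\le-\frac{\mu^4}{8L_m}\|d^k\|^2.$$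
   Context: CRN-SPP with parameters $\bar\gamma>0$, $\rho,\alpha\in(0,1)$: at iterate $z^k=(x^k;y^k)$ let $g^k=\nabla f(z^k)$, $H^k=\nabla^2 f(z^k)$ and for $\gamma>0$ define $f_k(x,y;\gamma)=f(z^k)+\langle g^k,z-z^k\rangle+\frac12(z-z^k)^\top H^k(z-z^k)+\frac{\gamma}{3}\|x-x^k\|^3-\frac{\gamma}{3}\|y-y^k\|^3$. Set $\gamma^k=\bar\gamma$, compute the saddle point $(\tilde x,\tilde y)$ of $\min_x\max_y f_k(x,y;\gamma^k)$, and let $u^k=\tilde x-x^k$, $v^k=\tilde y-y^k$; while $\gamma^k(\|u^k\|+\|v^k\|)>\mu$, replace $\gamma^k$ by $\rho\gamma^k$ and recompute. Set $d^k=(u^k;v^k)$, and $z^{k+1}=z^k+\alpha d^k$ if $m(z^k+\alpha d^k)<m(z^k+d^k)$, otherwise $z^{k+1}=z^k+d^k$. Norms: Euclidean for vectors, largest singular value for matrices. *)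

theory Defs
  imports "HOL-Analysis.Analysis"
begin

text \<open>Points z = (x;y) of R^n x R^m are pairs; the norm on the product type is the
Euclidean norm sqrt(|x|^2 + |y|^2). Bounded linear maps are blinfun, whose norm is the
operator norm (= largest singular value).\<close>

definition saddle_field ::
  "('n::euclidean_space \<times> 'm::euclidean_space \<Rightarrow> 'n \<times> 'm) \<Rightarrow> 'n \<times> 'm \<Rightarrow> 'n \<times> 'm" where
  "saddle_field g z = (fst (g z), - snd (g z))"

definition merit :: "('a \<Rightarrow> 'b::real_normed_vector) \<Rightarrow> 'a \<Rightarrow> real" where
  "merit F z = (1/2) * (norm (F z))^2"

text \<open>Cubic-regularized second-order model f_k(x', y'; gamma) at the iterate zk, where
fz = f(zk), gz = grad f(zk), Hz = Hessian of f at zk (as a linear map).\<close>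
definition crn_model ::
  "real \<Rightarrow> ('n::euclidean_space \<times> 'm::euclidean_space)
     \<Rightarrow> (('n \<times> 'm) \<Rightarrow>\<^sub>L ('n \<times> 'm)) \<Rightarrow> ('n \<times> 'm) \<Rightarrow> real \<Rightarrow> 'n \<Rightarrow> 'm \<Rightarrow> real" where
  "crn_model fz gz Hz zk \<gamma> x' y' =
     fz + inner gz ((x', y') - zk) + (1/2) * inner ((x', y') - zk) (blinfun_apply Hz ((x', y') - zk))
     + (\<gamma>/3) * norm (x' - fst zk) ^ 3 - (\<gamma>/3) * norm (y' - snd zk) ^ 3"

definition is_saddle_point :: "('n \<Rightarrow> 'm \<Rightarrow> real) \<Rightarrow> 'n \<Rightarrow> 'm \<Rightarrow> bool" where
  "is_saddle_point \<phi> xt yt \<longleftrightarrow> (\<forall>x y. \<phi> xt y \<le> \<phi> xt yt \<and> \<phi> xt yt \<le> \<phi> x yt)"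

definition crn_step ::
  "(('n::euclidean_space \<times> 'm::euclidean_space) \<Rightarrow> real) \<Rightarrow> ('n \<times> 'm \<Rightarrow> 'n \<times> 'm)
     \<Rightarrow> ('n \<times> 'm \<Rightarrow> ('n \<times> 'm) \<Rightarrow>\<^sub>L ('n \<times> 'm)) \<Rightarrow> ('n \<times> 'm) \<Rightarrow> real \<Rightarrow> ('n \<times> 'm) \<Rightarrow> bool" where
  "crn_step f g H zk \<gamma> d \<longleftrightarrow>
     is_saddle_point (crn_model (f zk) (g zk) (H zk) zk \<gamma>) (fst (zk + d)) (snd (zk + d))"

text \<open>The sequences z (iterates) and d (directions) are generated by CRN-SPP with parameters
gbar, rho, alpha and threshold mu: at step k the accepted regularization is gbar * rho^j where
j is the first backtracking index with gamma (|u|+|v|) <= mu (all earlier trial steps violate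
the test), d k is the step for that gamma, and then the stepsize alpha or 1 is chosen.\<close>
definition crn_spp_sequence ::
  "(('n::euclidean_space \<times> 'm::euclidean_space) \<Rightarrow> real) \<Rightarrow> ('n \<times> 'm \<Rightarrow> 'n \<times> 'm)
     \<Rightarrow> ('n \<times> 'm \<Rightarrow> ('n \<times> 'm) \<Rightarrow>\<^sub>L ('n \<times> 'm)) \<Rightarrow> real \<Rightarrow> real \<Rightarrow> real \<Rightarrow> real
     \<Rightarrow> (nat \<Rightarrow> 'n \<times> 'm) \<Rightarrow> (nat \<Rightarrow> 'n \<times> 'm) \<Rightarrow> bool" where
  "crn_spp_sequence f g H gbar \<rho> \<alpha> \<mu> z d \<longleftrightarrow>
     (\<forall>k. (\<exists>j::nat.
            (\<forall>i<j. \<forall>d'. crn_step f g H (z k) (gbar * \<rho> ^ i) d' \<longrightarrow>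
                 gbar * \<rho> ^ i * (norm (fst d') + norm (snd d')) > \<mu>)
          \<and> crn_step f g H (z k) (gbar * \<rho> ^ j) (d k)
          \<and> gbar * \<rho> ^ j * (norm (fst (d k)) + norm (snd (d k))) \<le> \<mu>)
        \<and> z (Suc k) =
            (if merit (saddle_field g) (z k + \<alpha> *\<^sub>R d k) < merit (saddle_field g) (z k + d k)
             then z k + \<alpha> *\<^sub>R d k else z k + d k))"

end

theory Submission
  imports Defs
begin

(* Strong convexity in x and strong concavity in y make the saddle field F strongly monotone, so
   its Jacobian satisfies <JF h, h> >= mu |h|^2. A saddle point z + d of the cubic model is a
   stationary point, F(z) + JF(z) d = -gamma (|u| u; |v| v), and the backtracking test
   gamma (|u| + |v|) <= mu bounds the right-hand side by mu |d|, whereas |JF(z) d| and |F(z)| are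
   both at least mu |d|. Expanding the square gives <F(z), JF(z) d> <= -mu^2 |d|^2 / 2: d is a
   descent direction for m. Along the segment m has curvature at most L^2 + L2 |F(z)|, and
   |F(z)| <= L D on the initial sublevel set because that set contains the zero of F. So the
   curvature is at most Lm, the step alpha = mu^2 / (2 Lm) decreases m by mu^4 |d|^2 / (8 Lm),
   and by induction all iterates stay in the sublevel set. *)

lemma has_field_derivative_along_line:
  fixes F :: "'a::real_normed_vector \<Rightarrow> real"
  assumes "(F has_derivative F') (at (x + s *\<^sub>R v))"
  shows "((\<lambda>s. F (x + s *\<^sub>R v)) has_field_derivative F' v) (at s)"
proof -
  have "((\<lambda>s. x + s *\<^sub>R v) has_derivative (\<lambda>s. s *\<^sub>R v)) (at s)"
    by (intro derivative_eq_intros) auto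
  from has_derivative_compose[OF this assms]
  have "((\<lambda>s. F (x + s *\<^sub>R v)) has_derivative (\<lambda>s. F' (s *\<^sub>R v))) (at s)" .
  moreover have "(\<lambda>s. F' (s *\<^sub>R v)) = (*) (F' v)"
    using has_derivative_linear[OF assms] by (auto simp: fun_eq_iff linear_scale)
  ultimately show ?thesis by (simp add: has_field_derivative_def)
qed

lemma second_difference_mean_value:
  fixes f :: "'a::real_inner \<Rightarrow> real"
  assumes grad: "\<And>w. (f has_derivative (\<lambda>h. inner (g w) h)) (at w)"
    and hess: "\<And>w. (g has_derivative blinfun_apply (H w)) (at w)"
    and t: "t > 0"
  obtains p where "norm (p - w) \<le> t * (norm a + norm b)"
    and "f (w + t *\<^sub>R a + t *\<^sub>R b) - f (w + t *\<^sub>R a) - f (w + t *\<^sub>R b) + f w = t\<^sup>2 * inner a (H p b)"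
proof -
  define \<phi> where "\<phi> s = f (w + t *\<^sub>R b + s *\<^sub>R a) - f (w + s *\<^sub>R a)" for s
  have "(\<phi> has_field_derivative
      inner (g (w + t *\<^sub>R b + s *\<^sub>R a)) a - inner (g (w + s *\<^sub>R a)) a) (at s)" for s
    unfolding \<phi>_def by (intro DERIV_diff has_field_derivative_along_line grad)
  then obtain \<xi> where \<xi>: "0 < \<xi>" "\<xi> < t"
    "\<phi> t - \<phi> 0 = t * (inner (g (w + t *\<^sub>R b + \<xi> *\<^sub>R a)) a - inner (g (w + \<xi> *\<^sub>R a)) a)"
    using MVT2[OF t, of \<phi>] by force
  define \<psi> where "\<psi> r = inner (g (w + \<xi> *\<^sub>R a + r *\<^sub>R b)) a" for r
  have "((\<lambda>x. inner (g x) a) has_derivative (\<lambda>h. inner (H x h) a)) (at x)" for x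
    by (rule derivative_eq_intros hess | simp)+
  then have "(\<psi> has_field_derivative inner (H (w + \<xi> *\<^sub>R a + r *\<^sub>R b) b) a) (at r)" for r
    unfolding \<psi>_def by (rule has_field_derivative_along_line)
  then obtain \<eta> where \<eta>: "0 < \<eta>" "\<eta> < t" "\<psi> t - \<psi> 0 = t * inner (H (w + \<xi> *\<^sub>R a + \<eta> *\<^sub>R b) b) a"
    using MVT2[OF t, of \<psi>] by force
  define p where "p = w + \<xi> *\<^sub>R a + \<eta> *\<^sub>R b"
  have "norm (p - w) \<le> norm (\<xi> *\<^sub>R a) + norm (\<eta> *\<^sub>R b)"
    unfolding p_def by (metis add_diff_cancel_left' add.assoc norm_triangle_ineq)
  also have "\<dots> \<le> t * (norm a + norm b)"
    using \<xi> \<eta> by (simp add: distrib_left add_mono mult_right_mono)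
  finally have dist: "norm (p - w) \<le> t * (norm a + norm b)" .
  have "f (w + t *\<^sub>R a + t *\<^sub>R b) - f (w + t *\<^sub>R a) - f (w + t *\<^sub>R b) + f w = \<phi> t - \<phi> 0"
    unfolding \<phi>_def by (simp add: algebra_simps)
  also have "\<dots> = t * (\<psi> t - \<psi> 0)"
    using \<xi>(3) unfolding \<psi>_def by (simp add: algebra_simps inner_diff_left)
  also have "\<dots> = t\<^sup>2 * inner a (H p b)"
    using \<eta>(3) unfolding p_def by (simp add: power2_eq_square inner_commute)
  finally show thesis by (rule that[OF dist])
qed

text \<open>Schwarz's theorem: the two mean-value forms of one second difference of \<open>f\<close> give
  \<open>\<langle>a, H p b\<rangle> = \<langle>b, H q a\<rangle>\<close> with \<open>p, q \<longrightarrow> w\<close>, and \<open>H\<close> is continuous.\<close>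
lemma hessian_symmetric:
  fixes f :: "'a::real_inner \<Rightarrow> real"
  assumes grad: "\<And>w. (f has_derivative (\<lambda>h. inner (g w) h)) (at w)"
    and hess: "\<And>w. (g has_derivative blinfun_apply (H w)) (at w)"
    and cont: "continuous_on UNIV H"
  shows "inner a (H w b) = inner b (H w a)"
proof -
  define r :: "nat \<Rightarrow> real" where "r n = inverse (Suc n) * (norm a + norm b)" for n
  have "\<exists>p q. norm (p - w) \<le> r n \<and> norm (q - w) \<le> r n \<and> inner a (H p b) = inner b (H q a)" for n
  proof -
    define t where "t = inverse (real (Suc n))"
    have t: "t > 0" unfolding t_def by simp
    obtain p where p: "norm (p - w) \<le> t * (norm a + norm b)"
        "f (w + t *\<^sub>R a + t *\<^sub>R b) - f (w + t *\<^sub>R a) - f (w + t *\<^sub>R b) + f w = t\<^sup>2 * inner a (H p b)"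
      using second_difference_mean_value[OF grad hess t] .
    obtain q where q: "norm (q - w) \<le> t * (norm b + norm a)"
        "f (w + t *\<^sub>R b + t *\<^sub>R a) - f (w + t *\<^sub>R b) - f (w + t *\<^sub>R a) + f w = t\<^sup>2 * inner b (H q a)"
      using second_difference_mean_value[OF grad hess t] .
    have "t\<^sup>2 * inner a (H p b) = t\<^sup>2 * inner b (H q a)"
      using p(2) q(2) by (simp add: algebra_simps)
    with t p(1) q(1) show ?thesis unfolding r_def t_def by (auto simp: add.commute)
  qed
  then obtain p q where pq: "\<And>n. norm (p n - w) \<le> r n" "\<And>n. norm (q n - w) \<le> r n"
    "\<And>n. inner a (H (p n) b) = inner b (H (q n) a)"
    by metis
  have r: "r \<longlonglongrightarrow> 0"
    unfolding r_def by (intro tendsto_mult_left_zero LIMSEQ_inverse_real_of_nat)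
  have "p \<longlonglongrightarrow> w" "q \<longlonglongrightarrow> w"
    using pq(1,2) by (auto simp: Lim_null[of _ w] intro!: Lim_null_comparison[OF always_eventually r])
  moreover have "isCont H w"
    using cont by (simp add: continuous_on_eq_continuous_at)
  ultimately have "(\<lambda>n. inner a (H (p n) b)) \<longlonglongrightarrow> inner a (H w b)"
    "(\<lambda>n. inner b (H (q n) a)) \<longlonglongrightarrow> inner b (H w a)"
    by (auto intro!: tendsto_intros blinfun.tendsto isCont_tendsto_compose[of _ H])
  then show ?thesis
    unfolding pq(3) by (rule LIMSEQ_unique)
qed

lemma convex_on_above_tangent:
  fixes \<phi> :: "'a::real_normed_vector \<Rightarrow> real"
  assumes convex: "convex_on UNIV \<phi>" and deriv: "(\<phi> has_derivative \<phi>') (at x)"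
  shows "\<phi> x + \<phi>' (y - x) \<le> \<phi> y"
proof -
  define \<psi> where "\<psi> t = \<phi> (x + t *\<^sub>R (y - x))" for t
  have "convex_on UNIV \<psi>"
  proof (rule convex_onI)
    fix t a b :: real
    assume t: "0 < t" "t < 1"
    have "x + ((1 - t) *\<^sub>R a + t *\<^sub>R b) *\<^sub>R (y - x)
        = (1 - t) *\<^sub>R (x + a *\<^sub>R (y - x)) + t *\<^sub>R (x + b *\<^sub>R (y - x))"
      by (simp add: algebra_simps)
    then show "\<psi> ((1 - t) *\<^sub>R a + t *\<^sub>R b) \<le> (1 - t) * \<psi> a + t * \<psi> b"
      unfolding \<psi>_def using convex_onD[OF convex, of t] t by simp
  qed simp
  moreover have "(\<psi> has_field_derivative \<phi>' (y - x)) (at 0)"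
    unfolding \<psi>_def by (rule has_field_derivative_along_line) (simp add: deriv)
  ultimately have "\<phi>' (y - x) * (1 - 0) \<le> \<psi> 1 - \<psi> 0"
    by (intro convex_on_imp_above_tangent[where A = UNIV]) auto
  then show ?thesis unfolding \<psi>_def by simp
qed

lemma strongly_convex_on_above_tangent:
  fixes \<phi> :: "'a::real_inner \<Rightarrow> real"
  assumes convex: "convex_on UNIV (\<lambda>x. \<phi> x - (\<mu> / 2) * (norm x)\<^sup>2)"
    and deriv: "(\<phi> has_derivative \<phi>') (at x)"
  shows "\<phi> x + \<phi>' (y - x) + (\<mu> / 2) * (norm (y - x))\<^sup>2 \<le> \<phi> y"
proof -
  have "((\<lambda>x. \<phi> x - (\<mu> / 2) * inner x x) has_derivative
      (\<lambda>h. \<phi>' h - (\<mu> / 2) * (inner x h + inner h x))) (at x)"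
    by (rule derivative_eq_intros deriv | simp)+
  from convex_on_above_tangent[OF convex[unfolded power2_norm_eq_inner] this, of y]
  show ?thesis
    by (simp add: power2_norm_eq_inner inner_diff_left inner_diff_right inner_commute algebra_simps)
qed

definition strongly_monotone :: "real \<Rightarrow> ('a::real_inner \<Rightarrow> 'a) \<Rightarrow> bool" where
  "strongly_monotone \<mu> F \<longleftrightarrow> (\<forall>z z'. \<mu> * (norm (z' - z))\<^sup>2 \<le> inner (F z' - F z) (z' - z))"

lemma saddle_field_strongly_monotone:
  fixes f :: "'x::euclidean_space \<times> 'y::euclidean_space \<Rightarrow> real"
  assumes grad: "\<And>w. (f has_derivative (\<lambda>h. inner (g w) h)) (at w)"
    and convex: "\<And>y. convex_on UNIV (\<lambda>x. f (x, y) - (\<mu> / 2) * (norm x)\<^sup>2)"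
    and concave: "\<And>x. convex_on UNIV (\<lambda>y. - f (x, y) - (\<mu> / 2) * (norm y)\<^sup>2)"
  shows "strongly_monotone \<mu> (saddle_field g)"
  unfolding strongly_monotone_def
proof (intro allI)
  fix z z' :: "'x \<times> 'y"
  obtain x y x' y' where z: "z = (x, y)" and z': "z' = (x', y')" by fastforce
  have dx: "((\<lambda>x. f (x, y)) has_derivative (\<lambda>h. inner (fst (g (x, y))) h)) (at x)" for x y
  proof -
    have "((\<lambda>x. (x, y)) has_derivative (\<lambda>h. (h, 0))) (at x)"
      by (intro derivative_eq_intros) auto
    from has_derivative_compose[OF this grad] show ?thesis by (simp add: inner_Pair_0)
  qed
  have dy: "((\<lambda>y. - f (x, y)) has_derivative (\<lambda>h. - inner (snd (g (x, y))) h)) (at y)" for x y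
  proof -
    have "((\<lambda>y. (x, y)) has_derivative (\<lambda>h. (0, h))) (at y)"
      by (intro derivative_eq_intros) auto
    from has_derivative_minus[OF has_derivative_compose[OF this grad]]
    show ?thesis by (simp add: inner_Pair_0)
  qed
  note fx = strongly_convex_on_above_tangent[OF convex dx]
  note fy = strongly_convex_on_above_tangent[OF concave dy]
  have "inner (saddle_field g z' - saddle_field g z) (z' - z)
      = inner (fst (g (x', y')) - fst (g (x, y))) (x' - x)
        - inner (snd (g (x', y')) - snd (g (x, y))) (y' - y)"
    unfolding z z' saddle_field_def by (simp add: inner_Pair algebra_simps)
  moreover have "(norm (z' - z))\<^sup>2 = (norm (x' - x))\<^sup>2 + (norm (y' - y))\<^sup>2"
    unfolding z z' by (simp add: norm_Pair)
  ultimately show "\<mu> * (norm (z' - z))\<^sup>2 \<le> inner (saddle_field g z' - saddle_field g z) (z' - z)"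
    using fx[of x y x'] fx[of x' y' x] fy[of x y y'] fy[of x' y' y]
    by (simp add: inner_diff_left inner_diff_right norm_minus_commute algebra_simps)
qed

lemma saddle_field_has_derivative:
  fixes g :: "'x::euclidean_space \<times> 'y::euclidean_space \<Rightarrow> 'x \<times> 'y"
  assumes "(g has_derivative g') (at w)"
  shows "(saddle_field g has_derivative (\<lambda>h. (fst (g' h), - snd (g' h)))) (at w)"
  unfolding saddle_field_def[abs_def] by (rule derivative_eq_intros assms | simp)+

lemma strongly_monotone_derivative_coercive:
  fixes F :: "'a::real_inner \<Rightarrow> 'a"
  assumes mono: "strongly_monotone \<mu> F" and deriv: "(F has_derivative F') (at w)"
  shows "\<mu> * (norm h)\<^sup>2 \<le> inner (F' h) h"
proof (rule ccontr)
  assume "\<not> ?thesis"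
  define q where "q t = inner (F (w + t *\<^sub>R h)) h - \<mu> * t * (norm h)\<^sup>2" for t
  have "((\<lambda>z. inner (F z) h) has_derivative (\<lambda>k. inner (F' k) h)) (at (w + 0 *\<^sub>R h))"
    using deriv by (auto intro!: derivative_eq_intros)
  from has_field_derivative_along_line[OF this]
  have "(q has_field_derivative inner (F' h) h - \<mu> * (norm h)\<^sup>2) (at 0)"
    unfolding q_def by (auto intro!: derivative_eq_intros)
  with \<open>\<not> ?thesis\<close> obtain e where e: "e > 0" "\<And>t. 0 < t \<Longrightarrow> t < e \<Longrightarrow> q t < q 0"
    using DERIV_neg_dec_right[of q _ 0] by force
  have "q 0 \<le> q t" if t: "t > 0" for t
  proof -
    have "t * (t * (\<mu> * (norm h)\<^sup>2)) \<le> t * (inner (F (w + t *\<^sub>R h)) h - inner (F w) h)"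
      using mono[unfolded strongly_monotone_def, rule_format, of w "w + t *\<^sub>R h"] t
      by (simp add: inner_diff_left power2_eq_square algebra_simps)
    then have "t * (\<mu> * (norm h)\<^sup>2) \<le> inner (F (w + t *\<^sub>R h)) h - inner (F w) h"
      using t by (rule mult_left_le_imp_le)
    then show ?thesis unfolding q_def by (simp add: algebra_simps)
  qed
  moreover have "q (e / 2) < q 0" using e by simp
  ultimately show False using e(1) by (metis half_gt_zero not_less)
qed

lemma coercive_le_norm_blinfun:
  fixes J :: "'a::euclidean_space \<Rightarrow>\<^sub>L 'a"
  assumes coercive: "\<And>h. \<mu> * (norm h)\<^sup>2 \<le> inner (J h) h"
  shows "\<mu> \<le> norm J"
proof -
  obtain b :: 'a where "b \<in> Basis" using nonempty_Basis by blast
  then have b: "norm b = 1" by simp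
  have "\<mu> = \<mu> * (norm b)\<^sup>2" using b by simp
  also have "\<dots> \<le> inner (J b) b" by (rule coercive)
  also have "\<dots> \<le> norm (J b) * norm b" by (rule norm_cauchy_schwarz)
  also have "\<dots> \<le> norm J" using norm_blinfun[of J b] b by simp
  finally show ?thesis .
qed

lemma lipschitz_constant_nonneg:
  fixes G :: "'a::euclidean_space \<Rightarrow> 'b::real_normed_vector"
  assumes "\<And>w w'. norm (G w - G w') \<le> K * norm (w - w')"
  shows "0 \<le> K"
proof -
  obtain b :: 'a where "b \<in> Basis" using nonempty_Basis by blast
  then have "norm b = 1" by simp
  then have "norm (G b - G 0) \<le> K" using assms[of b 0] by simp
  then show ?thesis using norm_ge_zero order_trans by blast
qed

lemma merit_has_derivative:
  fixes F :: "'a::real_inner \<Rightarrow> 'b::real_inner"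
  assumes "(F has_derivative F') (at w)"
  shows "(merit F has_derivative (\<lambda>h. inner (F w) (F' h))) (at w)"
proof -
  have "merit F = (\<lambda>x. 1/2 * inner (F x) (F x))"
    by (simp add: merit_def fun_eq_iff power2_norm_eq_inner)
  moreover have "((\<lambda>x. 1/2 * inner (F x) (F x)) has_derivative
      (\<lambda>h. 1/2 * (inner (F w) (F' h) + inner (F' h) (F w)))) (at w)"
    by (rule derivative_eq_intros assms refl | simp)+
  ultimately show ?thesis by (simp add: inner_commute)
qed

lemma merit_le_iff_norm_le: "merit F w \<le> merit F z \<longleftrightarrow> norm (F w) \<le> norm (F z)"
  unfolding merit_def by (simp add: power_mono_iff)

lemma strongly_monotone_merit_sublevel_dist_le:
  fixes F :: "'a::real_inner \<Rightarrow> 'a"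
  assumes "\<mu> > 0" and mono: "strongly_monotone \<mu> F" and "merit F w \<le> merit F z"
  shows "norm (w - z) \<le> 2 * norm (F z) / \<mu>"
proof -
  have "\<mu> * (norm (w - z))\<^sup>2 \<le> inner (F w - F z) (w - z)"
    using mono unfolding strongly_monotone_def by blast
  also have "\<dots> \<le> norm (F w - F z) * norm (w - z)" by (rule norm_cauchy_schwarz)
  also have "\<dots> \<le> (2 * norm (F z)) * norm (w - z)"
    using assms(3) norm_triangle_ineq4[of "F w" "F z"]
    by (intro mult_right_mono) (auto simp: merit_le_iff_norm_le)
  finally have "\<mu> * norm (w - z) * norm (w - z) \<le> (2 * norm (F z)) * norm (w - z)"
    by (simp add: power2_eq_square mult.assoc)
  then have "\<mu> * norm (w - z) \<le> 2 * norm (F z)"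
    by (cases "w = z") (auto simp: mult_le_cancel_right)
  with \<open>\<mu> > 0\<close> show ?thesis by (simp add: field_simps)
qed

text \<open>A minimiser of the merit function over a (compact) sublevel set is a stationary point of
  \<open>merit F\<close>, and coercivity of the derivative turns stationarity into \<open>F = 0\<close>.\<close>
lemma strongly_monotone_has_zero:
  fixes F :: "'a::euclidean_space \<Rightarrow> 'a"
  assumes "\<mu> > 0" and mono: "strongly_monotone \<mu> F"
    and deriv: "\<And>w. (F has_derivative F' w) (at w)"
  obtains zs where "F zs = 0"
proof -
  define S where "S = {w. merit F w \<le> merit F 0}"
  have cont: "continuous_on UNIV (merit F)"
    by (rule has_derivative_continuous_on)
      (auto intro: merit_has_derivative[OF deriv] has_derivative_at_withinI)
  have "closed S"
    unfolding S_def using cont by (intro closed_Collect_le continuous_intros) auto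
  moreover have "bounded S"
    unfolding bounded_iff S_def
    using strongly_monotone_merit_sublevel_dist_le[OF \<open>\<mu> > 0\<close> mono, where z = 0] by auto
  ultimately have "compact S" by (simp add: compact_eq_bounded_closed)
  moreover have "S \<noteq> {}" unfolding S_def by auto
  ultimately obtain zs where zs: "zs \<in> S" and min: "\<And>y. y \<in> S \<Longrightarrow> merit F zs \<le> merit F y"
    using continuous_attains_inf[of S "merit F"] continuous_on_subset[OF cont] by blast
  have "merit F zs \<le> merit F y" for y
    using zs min[of y] unfolding S_def by (cases "merit F y \<le> merit F 0") auto
  then have "(\<lambda>h. inner (F zs) (F' zs h)) = (\<lambda>h. 0)"
    by (intro has_derivative_local_min[OF merit_has_derivative[OF deriv]] always_eventually allI)
  from fun_cong[OF this, of "F zs"] have "inner (F zs) (F' zs (F zs)) = 0" by simp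
  then have "\<mu> * (norm (F zs))\<^sup>2 \<le> 0"
    using strongly_monotone_derivative_coercive[OF mono deriv, where w = zs and h = "F zs"]
    by (simp add: inner_commute)
  with \<open>\<mu> > 0\<close> have "F zs = 0" by (simp add: mult_le_0_iff)
  then show thesis by (rule that)
qed

lemma norm_diff_le_of_derivative_bound:
  fixes F :: "'a::real_normed_vector \<Rightarrow> 'b::real_normed_vector"
  assumes "\<And>w. (F has_derivative blinfun_apply (J w)) (at w)" and "\<And>w. norm (J w) \<le> L"
  shows "norm (F a - F b) \<le> L * norm (a - b)"
  using assms
  by (intro differentiable_bound[where S = UNIV and f' = "\<lambda>w. blinfun_apply (J w)"])
     (auto simp: has_derivative_at_withinI norm_blinfun.rep_eq[symmetric])

text \<open>The sublevel set contains a zero \<open>zs\<close> of \<open>F\<close>, so \<open>D \<ge> norm (z - zs)\<close>; then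
  \<open>norm (F w) \<le> norm (F z) = norm (F z - F zs) \<le> L * D\<close>.\<close>
lemma merit_sublevel_norm_le:
  fixes F :: "'a::euclidean_space \<Rightarrow> 'a"
  assumes "\<mu> > 0" and mono: "strongly_monotone \<mu> F"
    and deriv: "\<And>w. (F has_derivative blinfun_apply (J w)) (at w)" and bound: "\<And>w. norm (J w) \<le> L"
    and D: "D = Sup ((\<lambda>w. norm (w - z)) ` {w. merit F w \<le> merit F z})"
  shows "0 \<le> D" and "\<And>w. merit F w \<le> merit F z \<Longrightarrow> norm (F w) \<le> L * D"
proof -
  obtain zs where zs: "F zs = 0"
    using strongly_monotone_has_zero[OF \<open>\<mu> > 0\<close> mono deriv] .
  have "bdd_above ((\<lambda>w. norm (w - z)) ` {w. merit F w \<le> merit F z})"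
    unfolding bdd_above_def
    using strongly_monotone_merit_sublevel_dist_le[OF \<open>\<mu> > 0\<close> mono] by blast
  moreover have "merit F zs \<le> merit F z" using zs by (simp add: merit_def)
  ultimately have zs_D: "norm (zs - z) \<le> D"
    unfolding D by (intro cSUP_upper) simp_all
  then show "0 \<le> D" by (rule order_trans[OF norm_ge_zero])
  have "0 \<le> L" using bound[of z] norm_ge_zero order_trans by blast
  fix w assume "merit F w \<le> merit F z"
  then have "norm (F w) \<le> norm (F z - F zs)" by (simp add: merit_le_iff_norm_le zs)
  also have "\<dots> \<le> L * norm (z - zs)" by (rule norm_diff_le_of_derivative_bound[OF deriv bound])
  also have "\<dots> \<le> L * D" using zs_D \<open>0 \<le> L\<close> by (simp add: norm_minus_commute mult_left_mono)
  finally show "norm (F w) \<le> L * D" .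
qed

lemma has_derivative_norm_cube:
  fixes x :: "'a::real_inner"
  shows "((\<lambda>x. (norm x)^3) has_derivative (\<lambda>h. 3 * norm x * inner x h)) (at x)"
proof (cases "x = 0")
  case False
  have "((\<lambda>x. (norm x)^3) has_derivative (\<lambda>h. of_nat 3 * inner h (sgn x) * (norm x)^(3 - 1))) (at x)"
    by (rule has_derivative_power has_derivative_norm[OF False])+
  moreover have "(\<lambda>h. of_nat 3 * inner h (sgn x) * (norm x)^(3 - 1)) = (\<lambda>h. 3 * norm x * inner x h)"
    using False by (simp add: fun_eq_iff sgn_div_norm inner_commute power2_eq_square)
  ultimately show ?thesis by simp
next
  case True
  have "((\<lambda>h. (norm h)\<^sup>2) \<longlongrightarrow> 0) (at (0::'a))"
    by (auto intro!: tendsto_eq_intros)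
  then have "((\<lambda>h::'a. norm ((norm h)^3) / norm h) \<longlongrightarrow> 0) (at 0)"
    by (rule Lim_transform_eventually)
       (auto simp: eventually_at_filter power2_eq_square power3_eq_cube)
  with True show ?thesis by (simp add: has_derivative_at bounded_linear_zero)
qed

text \<open>The symmetry of the Hessian is what makes the gradient of the quadratic term equal to
  \<open>Hz (p - zk)\<close>.\<close>
lemma crn_model_has_derivative:
  fixes zk p :: "'x::euclidean_space \<times> 'y::euclidean_space" and Hz :: "('x \<times> 'y) \<Rightarrow>\<^sub>L ('x \<times> 'y)"
  assumes sym: "\<And>a b. inner a (Hz b) = inner b (Hz a)"
  shows "((\<lambda>p. crn_model fz gz Hz zk \<gamma> (fst p) (snd p)) has_derivative
     (\<lambda>h. inner (gz + Hz (p - zk) + ((\<gamma> * norm (fst (p - zk))) *\<^sub>R fst (p - zk),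
        - ((\<gamma> * norm (snd (p - zk))) *\<^sub>R snd (p - zk)))) h)) (at p)"
proof -
  have "((\<lambda>p. crn_model fz gz Hz zk \<gamma> (fst p) (snd p)) has_derivative
     (\<lambda>h. inner gz h + 1/2 * (inner h (Hz (p - zk)) + inner (p - zk) (Hz h))
        + \<gamma> * (norm (fst (p - zk)) * inner (fst (p - zk)) (fst h))
        - \<gamma> * (norm (snd (p - zk)) * inner (snd (p - zk)) (snd h)))) (at p)"
    unfolding crn_model_def prod.collapse
    by (rule has_derivative_compose[OF _ has_derivative_norm_cube] derivative_eq_intros refl
        | simp add: fun_eq_iff algebra_simps)+
  then show ?thesis
  proof (rule has_derivative_eq_rhs, intro ext)
    fix h :: "'x \<times> 'y"
    show "inner gz h + 1/2 * (inner h (Hz (p - zk)) + inner (p - zk) (Hz h))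
        + \<gamma> * (norm (fst (p - zk)) * inner (fst (p - zk)) (fst h))
        - \<gamma> * (norm (snd (p - zk)) * inner (snd (p - zk)) (snd h))
      = inner (gz + Hz (p - zk) + ((\<gamma> * norm (fst (p - zk))) *\<^sub>R fst (p - zk),
        - ((\<gamma> * norm (snd (p - zk))) *\<^sub>R snd (p - zk)))) h"
      unfolding sym[of "p - zk" h] by (cases h) (simp add: inner_add_left inner_commute algebra_simps)
  qed
qed

lemma is_saddle_point_gradient_eq_0:
  fixes \<phi> :: "'x::real_inner \<Rightarrow> 'y::real_inner \<Rightarrow> real"
  assumes deriv: "((\<lambda>p. \<phi> (fst p) (snd p)) has_derivative (\<lambda>h. inner R h)) (at (xt, yt))"
    and saddle: "is_saddle_point \<phi> xt yt"
  shows "R = 0"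
proof -
  have "((\<lambda>x. (x, yt)) has_derivative (\<lambda>h. (h, 0))) (at xt)"
    by (intro derivative_eq_intros) auto
  from has_derivative_compose[OF this deriv]
  have "((\<lambda>x. \<phi> x yt) has_derivative (\<lambda>h. inner R (h, 0))) (at xt)" by simp
  then have "(\<lambda>h. inner R (h, 0)) = (\<lambda>h. 0)"
    by (rule has_derivative_local_min) (use saddle in \<open>auto simp: is_saddle_point_def\<close>)
  then have "inner R (fst R, 0) = 0" by metis
  moreover
  have "((\<lambda>y. (xt, y)) has_derivative (\<lambda>h. (0, h))) (at yt)"
    by (intro derivative_eq_intros) auto
  from has_derivative_compose[OF this deriv]
  have "((\<lambda>y. \<phi> xt y) has_derivative (\<lambda>h. inner R (0, h))) (at yt)" by simp
  then have "(\<lambda>h. inner R (0, h)) = (\<lambda>h. 0)"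
    by (rule has_derivative_local_max) (use saddle in \<open>auto simp: is_saddle_point_def\<close>)
  then have "inner R (0, snd R) = 0" by metis
  ultimately show "R = 0" by (cases R) (simp add: inner_Pair zero_prod_def)
qed

lemma crn_step_stationary:
  fixes zk d :: "'x::euclidean_space \<times> 'y::euclidean_space"
  assumes step: "crn_step f g H zk \<gamma> d"
    and sym: "\<And>a b. inner a (H zk b) = inner b (H zk a)"
  shows "g zk + H zk d = (- ((\<gamma> * norm (fst d)) *\<^sub>R fst d), (\<gamma> * norm (snd d)) *\<^sub>R snd d)"
proof -
  have "g zk + H zk d + ((\<gamma> * norm (fst d)) *\<^sub>R fst d, - ((\<gamma> * norm (snd d)) *\<^sub>R snd d)) = 0"
  proof (rule is_saddle_point_gradient_eq_0)
    show "is_saddle_point (crn_model (f zk) (g zk) (H zk) zk \<gamma>) (fst (zk + d)) (snd (zk + d))"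
      using step unfolding crn_step_def .
    show "((\<lambda>p. crn_model (f zk) (g zk) (H zk) zk \<gamma> (fst p) (snd p)) has_derivative
        (\<lambda>h. inner (g zk + H zk d + ((\<gamma> * norm (fst d)) *\<^sub>R fst d, - ((\<gamma> * norm (snd d)) *\<^sub>R snd d))) h))
        (at (fst (zk + d), snd (zk + d)))"
      unfolding prod.collapse using crn_model_has_derivative[OF sym, of "f zk" "g zk" zk \<gamma> "zk + d"]
      by simp
  qed
  then show ?thesis
    by (simp add: prod_eq_iff eq_neg_iff_add_eq_0 flip: diff_conv_add_uminus)
qed

lemma mult_norm_le_norm_of_inner:
  fixes x d :: "'a::real_inner"
  assumes "\<mu> * (norm d)\<^sup>2 \<le> inner x d"
  shows "\<mu> * norm d \<le> norm x"
proof (cases "d = 0")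
  case False
  have "(\<mu> * norm d) * norm d \<le> norm x * norm d"
    using assms norm_cauchy_schwarz[of x d] by (simp add: power2_eq_square mult.assoc)
  with False show ?thesis by simp
qed simp

text \<open>The right-hand side of \<open>F0 + P\<close> has norm at most \<open>\<mu> |d|\<close>, while \<open>P\<close> and \<open>F0\<close>
  have norm at least \<open>\<mu> |d|\<close>; expanding \<open>|F0 + P|\<^sup>2\<close> bounds \<open>2 \<langle>F0, P\<rangle>\<close>.\<close>
lemma cubic_step_inner_le:
  fixes F0 P d :: "'x::real_inner \<times> 'y::real_inner"
  assumes "\<mu> > 0" and "\<gamma> \<ge> 0" and test: "\<gamma> * (norm (fst d) + norm (snd d)) \<le> \<mu>"
    and coercive: "\<mu> * (norm d)\<^sup>2 \<le> inner P d"
    and stat: "F0 + P = - \<gamma> *\<^sub>R (norm (fst d) *\<^sub>R fst d, norm (snd d) *\<^sub>R snd d)"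
  shows "inner F0 P \<le> - (\<mu>\<^sup>2 / 2) * (norm d)\<^sup>2"
proof -
  define a b where "a = norm (fst d)" and "b = norm (snd d)"
  define w where "w = (norm (fst d) *\<^sub>R fst d, norm (snd d) *\<^sub>R snd d)"
  have ab: "a \<ge> 0" "b \<ge> 0" unfolding a_def b_def by auto
  have nd: "(norm d)\<^sup>2 = a\<^sup>2 + b\<^sup>2" unfolding a_def b_def by (cases d) (simp add: norm_Pair)
  have "(norm (F0 + P))\<^sup>2 = \<gamma>\<^sup>2 * (a^4 + b^4)"
    unfolding stat a_def b_def using \<open>\<gamma> \<ge> 0\<close>
    by (simp add: norm_Pair power_mult_distrib power4_eq_xxxx power2_eq_square algebra_simps)
  also have "\<dots> \<le> \<gamma>\<^sup>2 * ((a + b)\<^sup>2 * (a\<^sup>2 + b\<^sup>2))"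
    using ab by (intro mult_left_mono)
      (simp_all add: power2_eq_square power4_eq_xxxx algebra_simps add_nonneg_nonneg mult_nonneg_nonneg)
  also have "\<dots> = (\<gamma> * (a + b))\<^sup>2 * (norm d)\<^sup>2"
    unfolding nd by (simp add: power_mult_distrib)
  also have "\<dots> \<le> \<mu>\<^sup>2 * (norm d)\<^sup>2"
    using test \<open>\<gamma> \<ge> 0\<close> ab unfolding a_def b_def by (intro mult_right_mono power_mono) auto
  finally have sum: "(norm (F0 + P))\<^sup>2 \<le> \<mu>\<^sup>2 * (norm d)\<^sup>2" .
  have "\<mu> * norm d \<le> norm P"
    by (rule mult_norm_le_norm_of_inner[OF coercive])
  then have P: "\<mu>\<^sup>2 * (norm d)\<^sup>2 \<le> (norm P)\<^sup>2"
    using \<open>\<mu> > 0\<close> by (metis power_mono power_mult_distrib zero_le_mult_iff norm_ge_zero less_imp_le)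
  have "inner w d \<ge> 0" unfolding w_def by (cases d) (simp add: inner_Pair)
  then have "\<mu> * (norm d)\<^sup>2 \<le> inner (P + \<gamma> *\<^sub>R w) d"
    using coercive \<open>\<gamma> \<ge> 0\<close> by (simp add: inner_add_left add_increasing2)
  also have "P + \<gamma> *\<^sub>R w = - F0"
  proof -
    have "- F0 = P - (F0 + P)" by simp
    then show ?thesis unfolding stat w_def by simp
  qed
  finally have "\<mu> * norm d \<le> norm F0"
    using mult_norm_le_norm_of_inner by fastforce
  then have F0: "\<mu>\<^sup>2 * (norm d)\<^sup>2 \<le> (norm F0)\<^sup>2"
    using \<open>\<mu> > 0\<close> by (metis power_mono power_mult_distrib zero_le_mult_iff norm_ge_zero less_imp_le)
  have "(norm (F0 + P))\<^sup>2 = (norm F0)\<^sup>2 + 2 * inner F0 P + (norm P)\<^sup>2"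
    by (simp add: power2_norm_eq_inner inner_add_left inner_add_right inner_commute)
  with sum P F0 show ?thesis by (simp add: field_simps)
qed

lemma crn_step_inner_saddle_field_le:
  fixes g :: "'x::euclidean_space \<times> 'y::euclidean_space \<Rightarrow> 'x \<times> 'y"
  assumes hess: "(g has_derivative blinfun_apply (H zk)) (at zk)"
    and deriv: "(saddle_field g has_derivative blinfun_apply J) (at zk)"
    and sym: "\<And>a b. inner a (H zk b) = inner b (H zk a)"
    and coercive: "\<And>h. \<mu> * (norm h)\<^sup>2 \<le> inner (J h) h"
    and "\<mu> > 0" and "\<gamma> \<ge> 0"
    and step: "crn_step f g H zk \<gamma> d"
    and test: "\<gamma> * (norm (fst d) + norm (snd d)) \<le> \<mu>"
  shows "inner (saddle_field g zk) (J d) \<le> - (\<mu>\<^sup>2 / 2) * (norm d)\<^sup>2"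
proof (rule cubic_step_inner_le[OF \<open>\<mu> > 0\<close> \<open>\<gamma> \<ge> 0\<close> test coercive])
  have "J d = (fst (H zk d), - snd (H zk d))"
    using has_derivative_unique[OF deriv saddle_field_has_derivative[OF hess]] by metis
  then show "saddle_field g zk + J d = - \<gamma> *\<^sub>R (norm (fst d) *\<^sub>R fst d, norm (snd d) *\<^sub>R snd d)"
    using crn_step_stationary[OF step sym] unfolding saddle_field_def
    by (simp add: prod_eq_iff) (metis minus_add_distrib diff_conv_add_uminus)
qed

text \<open>Along the segment, \<open>t \<mapsto> merit F (z + t d)\<close> has derivative \<open>\<langle>F, J d\<rangle>\<close> whose increment over
  \<open>[0, t]\<close> is at most \<open>t (L\<^sup>2 + L2 |F z|) |d|\<^sup>2\<close>: split it as
  \<open>\<langle>F zt - F z, J zt d\<rangle> + \<langle>F z, (J zt - J z) d\<rangle>\<close>.\<close>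
lemma merit_descent:
  fixes F :: "'a::real_inner \<Rightarrow> 'a" and J :: "'a \<Rightarrow> 'a \<Rightarrow>\<^sub>L 'a"
  assumes deriv: "\<And>w. (F has_derivative blinfun_apply (J w)) (at w)"
    and bound: "\<And>w. norm (J w) \<le> L"
    and lipschitz: "\<And>w w'. norm (J w - J w') \<le> L2 * norm (w - w')"
    and "\<alpha> \<ge> 0"
  shows "merit F (z + \<alpha> *\<^sub>R d) - merit F z
    \<le> \<alpha> * inner (F z) (J z d) + \<alpha>\<^sup>2 / 2 * ((L\<^sup>2 + L2 * norm (F z)) * (norm d)\<^sup>2)"
proof -
  define K where "K = (L\<^sup>2 + L2 * norm (F z)) * (norm d)\<^sup>2"
  define \<phi>' where "\<phi>' t = inner (F (z + t *\<^sub>R d)) (J (z + t *\<^sub>R d) d)" for t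
  define \<psi> where "\<psi> t = merit F (z + t *\<^sub>R d) - t * \<phi>' 0 - K * t\<^sup>2 / 2" for t
  have "(\<psi> has_field_derivative \<phi>' t - \<phi>' 0 - K * t) (at t)" for t
  proof -
    have "((\<lambda>t. merit F (z + t *\<^sub>R d)) has_field_derivative \<phi>' t) (at t)"
      unfolding \<phi>'_def by (rule has_field_derivative_along_line merit_has_derivative deriv)+
    then show ?thesis
      unfolding \<psi>_def by (auto intro!: derivative_eq_intros)
  qed
  moreover have "\<phi>' t - \<phi>' 0 - K * t \<le> 0" if "t \<ge> 0" for t
  proof -
    define zt where "zt = z + t *\<^sub>R d"
    have F_diff: "norm (F zt - F z) \<le> L * (t * norm d)"
      using norm_diff_le_of_derivative_bound[OF deriv bound, of zt z] \<open>t \<ge> 0\<close>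
      unfolding zt_def by simp
    have "\<phi>' t - \<phi>' 0 = inner (F zt - F z) (J zt d) + inner (F z) ((J zt - J z) d)"
      unfolding \<phi>'_def zt_def by (simp add: inner_diff_left inner_diff_right blinfun.diff_left)
    also have "\<dots> \<le> norm (F zt - F z) * norm (J zt d) + norm (F z) * norm ((J zt - J z) d)"
      by (intro add_mono norm_cauchy_schwarz)
    also have "\<dots> \<le> (L * (t * norm d)) * (L * norm d) + norm (F z) * ((L2 * (t * norm d)) * norm d)"
    proof (intro add_mono mult_mono mult_left_mono F_diff)
      show "norm (J zt d) \<le> L * norm d"
        using norm_blinfun[of "J zt" d] bound[of zt] by (meson mult_right_mono norm_ge_zero order_trans)
      show "norm ((J zt - J z) d) \<le> L2 * (t * norm d) * norm d"
        using norm_blinfun[of "J zt - J z" d] lipschitz[of zt z] \<open>t \<ge> 0\<close> unfolding zt_def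
        by (smt (verit, ccfv_SIG) add_diff_cancel_left' mult_right_mono norm_ge_zero norm_scaleR)
      show "0 \<le> L * (t * norm d)" using F_diff norm_ge_zero order_trans by blast
    qed auto
    also have "\<dots> = K * t" unfolding K_def by (simp add: power2_eq_square algebra_simps)
    finally show ?thesis by simp
  qed
  ultimately have "\<psi> \<alpha> \<le> \<psi> 0"
    using DERIV_nonpos_imp_nonincreasing[of 0 \<alpha> \<psi>] \<open>\<alpha> \<ge> 0\<close> by blast
  then show ?thesis unfolding \<psi>_def K_def \<phi>'_def by (simp add: field_simps)
qed

text \<open>With \<open>\<alpha> = \<mu>\<^sup>2 / (2 Lm)\<close> the quadratic term \<open>\<alpha>\<^sup>2 Lm |d|\<^sup>2 / 2\<close> eats half of the decrease
  \<open>\<alpha> \<mu>\<^sup>2 |d|\<^sup>2 / 2\<close> of the linear term.\<close>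
lemma merit_descent_stepsize:
  fixes F :: "'a::real_inner \<Rightarrow> 'a" and J :: "'a \<Rightarrow> 'a \<Rightarrow>\<^sub>L 'a"
  assumes deriv: "\<And>w. (F has_derivative blinfun_apply (J w)) (at w)"
    and bound: "\<And>w. norm (J w) \<le> L"
    and lipschitz: "\<And>w w'. norm (J w - J w') \<le> L2 * norm (w - w')"
    and descent: "inner (F z) (J z d) \<le> - (\<mu>\<^sup>2 / 2) * (norm d)\<^sup>2"
    and curvature: "L\<^sup>2 + L2 * norm (F z) \<le> Lm" and "Lm > 0"
  shows "merit F (z + (\<mu>\<^sup>2 / (2 * Lm)) *\<^sub>R d) - merit F z \<le> - (\<mu>^4 / (8 * Lm)) * (norm d)\<^sup>2"
proof -
  define \<alpha> where "\<alpha> = \<mu>\<^sup>2 / (2 * Lm)"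
  have "\<alpha> \<ge> 0" unfolding \<alpha>_def using \<open>Lm > 0\<close> by simp
  have "merit F (z + \<alpha> *\<^sub>R d) - merit F z
      \<le> \<alpha> * inner (F z) (J z d) + \<alpha>\<^sup>2 / 2 * ((L\<^sup>2 + L2 * norm (F z)) * (norm d)\<^sup>2)"
    by (rule merit_descent[OF deriv bound lipschitz \<open>\<alpha> \<ge> 0\<close>])
  also have "\<dots> \<le> \<alpha> * (- (\<mu>\<^sup>2 / 2) * (norm d)\<^sup>2) + \<alpha>\<^sup>2 / 2 * (Lm * (norm d)\<^sup>2)"
    using descent curvature \<open>\<alpha> \<ge> 0\<close>
    by (intro add_mono mult_left_mono mult_right_mono) auto
  also have "\<dots> = - (\<mu>^4 / (8 * Lm)) * (norm d)\<^sup>2"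
    unfolding \<alpha>_def using \<open>Lm > 0\<close> by (simp add: field_simps power2_eq_square power4_eq_xxxx)
  finally show ?thesis unfolding \<alpha>_def .
qed

lemma crn_spp_sequence_step:
  assumes "crn_spp_sequence f g H gbar \<rho> \<alpha> \<mu> z d" and "gbar > 0" and "\<rho> > 0"
  obtains \<gamma> where "\<gamma> > 0" and "crn_step f g H (z k) \<gamma> (d k)"
    and "\<gamma> * (norm (fst (d k)) + norm (snd (d k))) \<le> \<mu>"
    and "merit (saddle_field g) (z (Suc k)) \<le> merit (saddle_field g) (z k + \<alpha> *\<^sub>R d k)"
proof -
  from assms(1) obtain j where "crn_step f g H (z k) (gbar * \<rho> ^ j) (d k)"
    and "gbar * \<rho> ^ j * (norm (fst (d k)) + norm (snd (d k))) \<le> \<mu>"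
    and "z (Suc k) = (if merit (saddle_field g) (z k + \<alpha> *\<^sub>R d k) < merit (saddle_field g) (z k + d k)
       then z k + \<alpha> *\<^sub>R d k else z k + d k)"
    unfolding crn_spp_sequence_def by blast
  moreover have "gbar * \<rho> ^ j > 0" using assms(2,3) by simp
  ultimately show thesis by (intro that) auto
qed

lemma crn_spp_iteration_descent:
  fixes f :: "'x::euclidean_space \<times> 'y::euclidean_space \<Rightarrow> real"
  assumes grad: "\<And>w. (f has_derivative (\<lambda>h. inner (g w) h)) (at w)"
    and hess: "\<And>w. (g has_derivative blinfun_apply (H w)) (at w)"
    and hess_cont: "continuous_on UNIV H"
    and JF_deriv: "\<And>w. (saddle_field g has_derivative blinfun_apply (JF w)) (at w)"
    and JF_bound: "\<And>w. norm (JF w) \<le> L"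
    and JF_lip: "\<And>w w'. norm (JF w - JF w') \<le> L2 * norm (w - w')"
    and coercive: "\<And>w h. \<mu> * (norm h)\<^sup>2 \<le> inner (JF w h) h" and "\<mu> > 0"
    and gen: "crn_spp_sequence f g H gbar \<rho> (\<mu>\<^sup>2 / (2 * Lm)) \<mu> z d" and "gbar > 0" and "\<rho> > 0"
    and curvature: "L\<^sup>2 + L2 * norm (saddle_field g (z k)) \<le> Lm" and "Lm > 0"
  shows "merit (saddle_field g) (z (Suc k)) - merit (saddle_field g) (z k)
    \<le> - (\<mu>^4 / (8 * Lm)) * (norm (d k))\<^sup>2"
proof -
  obtain \<gamma> where "\<gamma> > 0" and step: "crn_step f g H (z k) \<gamma> (d k)"
    and test: "\<gamma> * (norm (fst (d k)) + norm (snd (d k))) \<le> \<mu>"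
    and update: "merit (saddle_field g) (z (Suc k))
      \<le> merit (saddle_field g) (z k + (\<mu>\<^sup>2 / (2 * Lm)) *\<^sub>R d k)"
    using crn_spp_sequence_step[OF gen \<open>gbar > 0\<close> \<open>\<rho> > 0\<close>] by blast
  have "inner (saddle_field g (z k)) (JF (z k) (d k)) \<le> - (\<mu>\<^sup>2 / 2) * (norm (d k))\<^sup>2"
    by (rule crn_step_inner_saddle_field_le[OF hess JF_deriv hessian_symmetric[OF grad hess hess_cont]
          coercive \<open>\<mu> > 0\<close> less_imp_le[OF \<open>\<gamma> > 0\<close>] step test])
  from merit_descent_stepsize[OF JF_deriv JF_bound JF_lip this curvature \<open>Lm > 0\<close>] update
  show ?thesis by linarith
qed

theorem proposition3p4:
  fixes f :: "(real ^ 'n) \<times> (real ^ 'm) \<Rightarrow> real"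
    and g :: "(real ^ 'n) \<times> (real ^ 'm) \<Rightarrow> (real ^ 'n) \<times> (real ^ 'm)"
    and H :: "(real ^ 'n) \<times> (real ^ 'm) \<Rightarrow> ((real ^ 'n) \<times> (real ^ 'm)) \<Rightarrow>\<^sub>L ((real ^ 'n) \<times> (real ^ 'm))"
    and JF :: "(real ^ 'n) \<times> (real ^ 'm) \<Rightarrow> ((real ^ 'n) \<times> (real ^ 'm)) \<Rightarrow>\<^sub>L ((real ^ 'n) \<times> (real ^ 'm))"
    and \<mu> L L2 gbar \<rho> \<alpha> D Lm :: real
    and z d :: "nat \<Rightarrow> (real ^ 'n) \<times> (real ^ 'm)"
  assumes grad: "\<And>w. (f has_derivative (\<lambda>h. inner (g w) h)) (at w)"
    and hess: "\<And>w. (g has_derivative blinfun_apply (H w)) (at w)"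
    and hess_cont: "continuous_on UNIV H"
    and mu_pos: "\<mu> > 0"
    and strong_convex: "\<And>y. convex_on UNIV (\<lambda>x. f (x, y) - (\<mu> / 2) * (norm x)^2)"
    and strong_concave: "\<And>x. convex_on UNIV (\<lambda>y. - f (x, y) - (\<mu> / 2) * (norm y)^2)"
    and JF_deriv: "\<And>w. (saddle_field g has_derivative blinfun_apply (JF w)) (at w)"
    and JF_bound: "\<And>w. norm (JF w) \<le> L"
    and JF_lip: "\<And>w w'. norm (JF w - JF w') \<le> L2 * norm (w - w')"
    and D_def: "D = Sup ((\<lambda>w. norm (w - z 0)) ` {w. merit (saddle_field g) w \<le> merit (saddle_field g) (z 0)})"
    and Lm_def: "Lm = L^2 + L2 * L * D"
    and gbar_pos: "gbar > 0"
    and rho: "0 < \<rho>" "\<rho> < 1"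
    and alpha_def: "\<alpha> = \<mu>^2 / (2 * Lm)"
    and alpha_lt1: "\<alpha> < 1"
    and gen: "crn_spp_sequence f g H gbar \<rho> \<alpha> \<mu> z d"
  shows "\<forall>k. merit (saddle_field g) (z (Suc k)) - merit (saddle_field g) (z k)
             \<le> - (\<mu>^4 / (8 * Lm)) * (norm (d k))^2"
proof -
  define F where "F = saddle_field g"
  have mono: "strongly_monotone \<mu> F"
    unfolding F_def by (rule saddle_field_strongly_monotone[OF grad strong_convex strong_concave])
  have coercive: "\<mu> * (norm h)\<^sup>2 \<le> inner (JF w h) h" for w h
    by (rule strongly_monotone_derivative_coercive[OF mono JF_deriv[folded F_def]])
  note sublevel = merit_sublevel_norm_le[OF mu_pos mono JF_deriv[folded F_def] JF_bound D_def[folded F_def]]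
  have "\<mu> \<le> L" using coercive_le_norm_blinfun[OF coercive] JF_bound order_trans by blast
  have L2: "0 \<le> L2" using JF_lip by (rule lipschitz_constant_nonneg)
  have Lm_pos: "Lm > 0"
    unfolding Lm_def using \<open>\<mu> \<le> L\<close> mu_pos L2 sublevel(1)
    by (intro add_pos_nonneg mult_nonneg_nonneg) auto
  have descent: "merit F (z (Suc k)) - merit F (z k) \<le> - (\<mu>^4 / (8 * Lm)) * (norm (d k))\<^sup>2"
    if "merit F (z k) \<le> merit F (z 0)" for k
  proof -
    have "L\<^sup>2 + L2 * norm (F (z k)) \<le> Lm"
      unfolding Lm_def using sublevel(2)[OF that] L2 by (simp add: mult_left_mono mult.assoc)
    then show ?thesis unfolding F_def
      by (rule crn_spp_iteration_descent[OF grad hess hess_cont JF_deriv JF_bound JF_lip coercive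
            mu_pos gen[unfolded alpha_def] gbar_pos rho(1) _ Lm_pos])
  qed
  have "merit F (z k) \<le> merit F (z 0)" for k
  proof (induction k)
    case (Suc k)
    have "0 \<le> \<mu>^4 / (8 * Lm) * (norm (d k))\<^sup>2" using Lm_pos by simp
    with descent[OF Suc] Suc show ?case by linarith
  qed simp
  with descent show ?thesis unfolding F_def by blast
qed

end
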